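(* Consider the discrete system, depending on a time step $h$, $$\frac{\tilde{x}-x}{h} = a x+ \hat{a} \tilde{x} - \big(bxy+c \tilde{x}\tilde{y}+d x\tilde{y} + e \tilde{x}y\big), \qquad \frac{\tilde{y}-y}{h} = - A y -\hat{A}\tilde{y} + \big(Bxy+C \tilde{x}\tilde{y}+D x\tilde{y} + E \tilde{x}y\big),$$ where the constants $a,\hat a,b,c,d,e,A,\hat A,B,C,D,E$ are independent of $h$ and satisfy $$a+\hat{a} = A + \hat{A} = b+c+d+e = B+C+D+E = 1.$$ Such a system is specified by the list $\{a,b,c,d,e,A,B,C,D,E\}$ (with $\hat a=1-a$, $\hat A=1-A$). The system defines a birational map $\varphi:(x,y)\mapsto(\tilde x,\tilde y)$ (i.e. $\tilde x,\tilde y$ are given explicitly and uniquely as rational functions of $x,y$ (and $h$), and $x,y$ are given explicitly and uniquely as rational functions of $\tilde x,\tilde y$ (and $h$), for generic $h$) if and only if the parameters belong to one of the following cases: (i) $\{a,0,0,d,e,A,0,0,D,E\}$ with $d+e=1=D+E$; (ii) $\{a,0,0,1,0,A,B,0,D,E\}$ with $B+D+E=1$; (iii) $\{a,0,0,0,1,A,0,C,D,E\}$ with $C+D+E=1$; (iv) $\{a,b,0,d,e,A,0,0,0,1\}$ with $b+d+e=1$; (v) $\{a,0,c,d,e,A,0,0,1,0\}$ with $c+d+e=1$; (vi) $\{a,0,c,d,0,A,B,0,D,0\}$ with $c+d=1=B+D$; (vii) $\{a,b,0,0,e,A,0,C,0,E\}$ with $b+e=1=C+E$. In each case $a$ and $A$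 are arbitrary.
   Context: The system is a first-order discretization of the Lotka–Volterra system $\dot x = x(1-y)$, $\dot y = y(x-1)$, obtained by replacing $x\to ax+\hat a\tilde x$, $y\to Ay+\hat A\tilde y$, and $xy$ by a linear combination of $xy,\tilde x\tilde y,x\tilde y,\tilde x y$; here $\tilde x,\tilde y$ denote the values of the variables after one time step $h$. *)

theory Defs
  imports Complex_Main
begin

definition poly3_fun :: "(complex \<Rightarrow> complex \<Rightarrow> complex \<Rightarrow> complex) \<Rightarrow> bool" where
  "poly3_fun f \<longleftrightarrow> (\<exists>n::nat. \<exists>c :: nat \<Rightarrow> nat \<Rightarrow> nat \<Rightarrow> complex.
     \<forall>h u v. f h u v = (\<Sum>i\<le>n. \<Sum>j\<le>n. \<Sum>k\<le>n. c i j k * h ^ i * u ^ j * v ^ k))"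

definition LV_sys :: "real \<Rightarrow> real \<Rightarrow> real \<Rightarrow> real \<Rightarrow> real \<Rightarrow> real \<Rightarrow> real \<Rightarrow> real \<Rightarrow> real \<Rightarrow> real
   \<Rightarrow> complex \<Rightarrow> complex \<Rightarrow> complex \<Rightarrow> complex \<Rightarrow> complex \<Rightarrow> bool" where
  "LV_sys a b c d e A B C D E h x y xt yt \<longleftrightarrow>
     (xt - x) / h = of_real a * x + of_real (1 - a) * xt
        - (of_real b * x * y + of_real c * xt * yt + of_real d * x * yt + of_real e * xt * y)
   \<and> (yt - y) / h = - of_real A * y - of_real (1 - A) * yt
        + (of_real B * x * y + of_real C * xt * yt + of_real D * x * yt + of_real E * xt * y)"

definition generically_rational_solution ::
  "(complex \<Rightarrow> complex \<Rightarrow> complex \<Rightarrow> complex \<Rightarrow> complex \<Rightarrow> bool) \<Rightarrow> bool" where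
  "generically_rational_solution R \<longleftrightarrow>
     (\<exists>N1 N2 Q G. poly3_fun N1 \<and> poly3_fun N2 \<and> poly3_fun Q \<and> poly3_fun G \<and>
        G \<noteq> (\<lambda>_ _ _. 0) \<and>
        (\<forall>h u v. G h u v \<noteq> 0 \<longrightarrow> Q h u v \<noteq> 0 \<and>
           {(s, t). R h u v s t} = {(N1 h u v / Q h u v, N2 h u v / Q h u v)}))"

definition LV_birational :: "real \<Rightarrow> real \<Rightarrow> real \<Rightarrow> real \<Rightarrow> real \<Rightarrow> real \<Rightarrow> real \<Rightarrow> real \<Rightarrow> real \<Rightarrow> real \<Rightarrow> bool" where
  "LV_birational a b c d e A B C D E \<longleftrightarrow>
     generically_rational_solution (\<lambda>h x y xt yt. LV_sys a b c d e A B C D E h x y xt yt)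
   \<and> generically_rational_solution (\<lambda>h xt yt x y. LV_sys a b c d e A B C D E h x y xt yt)"

end

theory Submission
  imports Defs "HOL-Complex_Analysis.Conformal_Mappings"
begin

(* Both directions of the discrete map are instances of one "bilinear scheme"
     s - x = h (a1 x + a2 s + b x y + c s t + d x t + e s y),
     t - y = h (A1 y + A2 t + B x y + C s t + D x t + E s y),
   solved for (s, t): the forward map directly, the backward map after exchanging the roles
   of (x, y) and (s, t) and replacing h by -h.  The core result (gr_bilinear_scheme_iff) says
   that such a scheme has a generically unique rational solution iff
   (c = C = 0) or (c = d = 0) or (C = E = 0).  In the first two cases the system is linear,
   resp. triangular, in (s, t) and Cramer's rule gives the solution; otherwise, eliminating t
   leaves a quadratic in s whose discriminant is a nonzero polynomial, so there are two
   distinct solutions at generic points. *)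

definition monomial_sum ::
  "(nat \<times> nat \<times> nat) set \<Rightarrow> (nat \<times> nat \<times> nat \<Rightarrow> complex) \<Rightarrow> complex \<Rightarrow> complex \<Rightarrow> complex \<Rightarrow> complex" where
  "monomial_sum S c h u v = (\<Sum>(i, j, k)\<in>S. c (i, j, k) * h ^ i * u ^ j * v ^ k)"

lemma monomial_sum_superset:
  assumes "finite T" and "S \<subseteq> T"
  shows "monomial_sum S c = monomial_sum T (\<lambda>m. if m \<in> S then c m else 0)"
  unfolding monomial_sum_def
  by (intro ext sum.mono_neutral_cong_left assms) auto

lemma monomial_sum_box:
  "monomial_sum ({..n} \<times> {..n} \<times> {..n}) c h u v =
   (\<Sum>i\<le>n. \<Sum>j\<le>n. \<Sum>k\<le>n. c (i, j, k) * h ^ i * u ^ j * v ^ k)"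
  unfolding monomial_sum_def by (simp add: sum.cartesian_product)

lemma finite_triples_bounded:
  fixes S :: "(nat \<times> nat \<times> nat) set"
  assumes "finite S"
  shows "\<exists>n. S \<subseteq> {..n} \<times> {..n} \<times> {..n}"
proof -
  define n where "n = Max ((\<lambda>(i, j, k). i + j + k) ` S)"
  have "m \<in> {..n} \<times> {..n} \<times> {..n}" if m: "m \<in> S" for m
  proof -
    obtain i j k where ijk: "m = (i, j, k)" by (cases m)
    have "(\<lambda>(i, j, k). i + j + k) m \<le> n"
      unfolding n_def using assms m by (intro Max_ge finite_imageI imageI)
    then show "m \<in> {..n} \<times> {..n} \<times> {..n}" unfolding ijk by simp
  qed
  then show ?thesis by blast
qed

lemma poly3_fun_monomial_sum:
  assumes "finite S"
  shows "poly3_fun (monomial_sum S c)"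
proof -
  obtain n where n: "S \<subseteq> {..n} \<times> {..n} \<times> {..n}" using finite_triples_bounded[OF assms] ..
  define c' where "c' = (\<lambda>m. if m \<in> S then c m else 0)"
  have "monomial_sum S c = monomial_sum ({..n} \<times> {..n} \<times> {..n}) c'"
    unfolding c'_def by (rule monomial_sum_superset) (use n in auto)
  then have "monomial_sum S c h u v = (\<Sum>i\<le>n. \<Sum>j\<le>n. \<Sum>k\<le>n. c' (i, j, k) * h ^ i * u ^ j * v ^ k)"
    for h u v
    by (simp only: monomial_sum_box)
  then show ?thesis
    unfolding poly3_fun_def by (intro exI[of _ n] exI[of _ "\<lambda>i j k. c' (i, j, k)"]) simp
qed

(* Polynomial functions are exactly the monomial sums with finite support; this form is
   closed under union of supports and makes the closure properties below easy. *)
lemma poly3_fun_iff_monomial_sum: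
  "poly3_fun f \<longleftrightarrow> (\<exists>S c. finite S \<and> f = monomial_sum S c)"
proof
  assume "poly3_fun f"
  then obtain n c where f: "\<forall>h u v. f h u v = (\<Sum>i\<le>n. \<Sum>j\<le>n. \<Sum>k\<le>n. c i j k * h ^ i * u ^ j * v ^ k)"
    unfolding poly3_fun_def by blast
  have "f = monomial_sum ({..n} \<times> {..n} \<times> {..n}) (\<lambda>(i, j, k). c i j k)"
    using f by (simp add: fun_eq_iff monomial_sum_box)
  moreover have "finite ({..n} \<times> {..n} \<times> {..n})" by simp
  ultimately show "\<exists>S c. finite S \<and> f = monomial_sum S c" by blast
next
  assume "\<exists>S c. finite S \<and> f = monomial_sum S c"
  then obtain S c where "finite S" and "f = monomial_sum S c" by blast
  then show "poly3_fun f" by (simp add: poly3_fun_monomial_sum)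
qed

lemma poly3_monomial: "poly3_fun (\<lambda>h u v. a * h ^ i * u ^ j * v ^ k)"
proof -
  have "(\<lambda>h u v. a * h ^ i * u ^ j * v ^ k) = monomial_sum {(i, j, k)} (\<lambda>_. a)"
    by (simp add: fun_eq_iff monomial_sum_def)
  then show ?thesis unfolding poly3_fun_iff_monomial_sum by blast
qed

lemma poly3_add:
  assumes "poly3_fun f" and "poly3_fun g"
  shows "poly3_fun (\<lambda>h u v. f h u v + g h u v)"
proof -
  obtain S c T d where fin: "finite S" "finite T"
    and f: "f = monomial_sum S c" and g: "g = monomial_sum T d"
    using assms unfolding poly3_fun_iff_monomial_sum by blast
  define c' where "c' = (\<lambda>m. if m \<in> S then c m else 0)"
  define d' where "d' = (\<lambda>m. if m \<in> T then d m else 0)"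
  have "f = monomial_sum (S \<union> T) c'" "g = monomial_sum (S \<union> T) d'"
    unfolding f g c'_def d'_def using fin by (auto intro: monomial_sum_superset)
  then have "(\<lambda>h u v. f h u v + g h u v) = monomial_sum (S \<union> T) (\<lambda>m. c' m + d' m)"
    by (simp add: fun_eq_iff monomial_sum_def sum.distrib[symmetric] case_prod_beta algebra_simps)
  then show ?thesis unfolding poly3_fun_iff_monomial_sum using fin by blast
qed

lemma poly3_const: "poly3_fun (\<lambda>h u v. a)"
  using poly3_monomial[of a 0 0 0] by simp

lemma poly3_sum:
  assumes "finite A" and "\<And>x. x \<in> A \<Longrightarrow> poly3_fun (F x)"
  shows "poly3_fun (\<lambda>h u v. \<Sum>x\<in>A. F x h u v)"
  using assms by (induction A rule: finite_induct) (auto intro: poly3_add poly3_const)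

lemma poly3_mult:
  assumes "poly3_fun f" and "poly3_fun g"
  shows "poly3_fun (\<lambda>h u v. f h u v * g h u v)"
proof -
  obtain S c T d where fin: "finite S" "finite T"
    and f: "f = monomial_sum S c" and g: "g = monomial_sum T d"
    using assms unfolding poly3_fun_iff_monomial_sum by blast
  have "f h u v * g h u v = (\<Sum>(i, j, k)\<in>S. \<Sum>(i', j', k')\<in>T.
          (c (i, j, k) * d (i', j', k')) * h ^ (i + i') * u ^ (j + j') * v ^ (k + k'))" for h u v
    unfolding f g monomial_sum_def sum_product
    by (auto simp: power_add mult_ac split: prod.split intro!: sum.cong)
  then show ?thesis
    using fin by (auto simp: case_prod_beta intro!: poly3_sum poly3_monomial)
qed

lemma poly3_power: "poly3_fun f \<Longrightarrow> poly3_fun (\<lambda>h u v. f h u v ^ n)"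
  by (induction n) (auto intro: poly3_mult poly3_const)

lemma poly3_h: "poly3_fun (\<lambda>h u v. h)"
  and poly3_u: "poly3_fun (\<lambda>h u v. u)"
  and poly3_v: "poly3_fun (\<lambda>h u v. v)"
  using poly3_monomial[of 1 1 0 0] poly3_monomial[of 1 0 1 0] poly3_monomial[of 1 0 0 1] by simp_all

lemma poly3_diff: "poly3_fun f \<Longrightarrow> poly3_fun g \<Longrightarrow> poly3_fun (\<lambda>h u v. f h u v - g h u v)"
  using poly3_add[OF _ poly3_mult[OF poly3_const[of "-1"]], of f g] by simp

lemma poly3_uminus: "poly3_fun f \<Longrightarrow> poly3_fun (\<lambda>h u v. - f h u v)"
  using poly3_diff[OF poly3_const[of 0]] by simp

lemmas poly3_intros = poly3_add poly3_diff poly3_uminus poly3_mult poly3_power poly3_const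
  poly3_h poly3_u poly3_v

lemma poly3_compose:
  assumes "poly3_fun f" and "poly3_fun g1" "poly3_fun g2" "poly3_fun g3"
  shows "poly3_fun (\<lambda>h u v. f (g1 h u v) (g2 h u v) (g3 h u v))"
proof -
  obtain S c where "finite S" and "f = monomial_sum S c"
    using assms(1) unfolding poly3_fun_iff_monomial_sum by blast
  then show ?thesis unfolding monomial_sum_def
    by (auto simp: case_prod_beta intro!: poly3_sum poly3_intros assms(2-4))
qed

lemma poly3_holomorphic_on_lines:
  "poly3_fun f \<Longrightarrow> (\<lambda>t. f (a1 + t * b1) (a2 + t * b2) (a3 + t * b3)) holomorphic_on UNIV"
  unfolding poly3_fun_def by (auto intro!: holomorphic_intros)

(* Two polynomials that are not identically zero have a common non-root: on the line through
   a non-root of each, the first is nonzero on an open set, so by analytic continuation the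
   second cannot vanish there. *)
lemma poly3_common_nonzero:
  assumes F: "poly3_fun F" and G: "poly3_fun G"
    and Fa: "F a1 a2 a3 \<noteq> 0" and Gb: "G b1 b2 b3 \<noteq> 0"
  shows "\<exists>h u v. F h u v \<noteq> 0 \<and> G h u v \<noteq> 0"
proof (rule ccontr)
  assume no_common: "\<not> ?thesis"
  define \<phi> where "\<phi> = (\<lambda>t. F (a1 + t * (b1 - a1)) (a2 + t * (b2 - a2)) (a3 + t * (b3 - a3)))"
  define \<psi> where "\<psi> = (\<lambda>t. G (a1 + t * (b1 - a1)) (a2 + t * (b2 - a2)) (a3 + t * (b3 - a3)))"
  have hol: "\<phi> holomorphic_on UNIV" "\<psi> holomorphic_on UNIV"
    unfolding \<phi>_def \<psi>_def using F G by (auto intro: poly3_holomorphic_on_lines)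
  have "open {t. \<phi> t \<noteq> (\<lambda>_. 0) t}"
    using hol(1) by (intro open_Collect_neq) (auto intro: holomorphic_on_imp_continuous_on)
  moreover have "{t. \<phi> t \<noteq> (\<lambda>_. 0) t} \<noteq> {}" using Fa by (auto simp: \<phi>_def intro!: exI[of _ 0])
  ultimately have "\<psi> 1 = (\<lambda>_. 0) 1"
    by (rule analytic_continuation_open[OF _ open_UNIV _ connected_UNIV subset_UNIV hol(2)])
      (use no_common in \<open>auto simp: \<phi>_def \<psi>_def\<close>)
  then show False using Gb by (simp add: \<psi>_def)
qed

lemma nonzero_near_zero:
  fixes f :: "complex \<Rightarrow> complex"
  assumes "isCont f 0" and "f 0 \<noteq> 0"
  shows "\<exists>h. h \<noteq> 0 \<and> f h \<noteq> 0"
proof (rule ccontr)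
  assume "\<not> ?thesis"
  then have "\<forall>\<^sub>F h in at 0. f h = 0" by (auto simp: eventually_at intro!: exI[of _ 1])
  then have "f \<midarrow>0\<rightarrow> 0" by (rule tendsto_eventually)
  moreover have "f \<midarrow>0\<rightarrow> f 0" using assms(1) by (simp add: isCont_def)
  ultimately show False using LIM_unique assms(2) by blast
qed

(* Generic rational solvability only depends on the relation for h \<noteq> 0: multiplying the
   genericity polynomial by h excludes h = 0 and keeps it nonzero. *)
lemma gr_cong_imp:
  assumes eq: "\<And>h u v s t. h \<noteq> 0 \<Longrightarrow> R h u v s t \<longleftrightarrow> R' h u v s t"
    and gr: "generically_rational_solution R"
  shows "generically_rational_solution R'"
proof -
  obtain N1 N2 Q G where p: "poly3_fun N1" "poly3_fun N2" "poly3_fun Q" "poly3_fun G"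
    and G0: "G \<noteq> (\<lambda>_ _ _. 0)"
    and sol: "\<And>h u v. G h u v \<noteq> 0 \<Longrightarrow>
       Q h u v \<noteq> 0 \<and> {(s, t). R h u v s t} = {(N1 h u v / Q h u v, N2 h u v / Q h u v)}"
    using gr unfolding generically_rational_solution_def by blast
  obtain g1 g2 g3 where G: "G g1 g2 g3 \<noteq> 0" using G0 by (meson ext)
  obtain h u v where "h \<noteq> 0" "G h u v \<noteq> 0"
    using poly3_common_nonzero[OF poly3_h p(4) one_neq_zero G] by blast
  then have hG0: "(\<lambda>h u v. h * G h u v) \<noteq> (\<lambda>_ _ _. 0)" by (metis mult_eq_0_iff)
  have "Q h u v \<noteq> 0 \<and> {(s, t). R' h u v s t} = {(N1 h u v / Q h u v, N2 h u v / Q h u v)}"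
    if "h * G h u v \<noteq> 0" for h u v
  proof -
    have "{(s, t). R' h u v s t} = {(s, t). R h u v s t}" using eq that by auto
    then show ?thesis using sol that by simp
  qed
  moreover have "poly3_fun (\<lambda>h u v. h * G h u v)" by (rule poly3_mult[OF poly3_h p(4)])
  ultimately show ?thesis unfolding generically_rational_solution_def
    using p(1-3) hG0 by blast
qed

lemma gr_cong:
  "(\<And>h u v s t. h \<noteq> 0 \<Longrightarrow> R h u v s t \<longleftrightarrow> R' h u v s t) \<Longrightarrow>
    generically_rational_solution R \<longleftrightarrow> generically_rational_solution R'"
  using gr_cong_imp[of R R'] gr_cong_imp[of R' R] by blast

lemma gr_substitute:
  assumes gr: "generically_rational_solution R"
    and \<phi>: "poly3_fun \<phi>1" "poly3_fun \<phi>2" "poly3_fun \<phi>3"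
    and involution: "\<And>h u v. \<phi>1 (\<phi>1 h u v) (\<phi>2 h u v) (\<phi>3 h u v) = h \<and>
       \<phi>2 (\<phi>1 h u v) (\<phi>2 h u v) (\<phi>3 h u v) = u \<and> \<phi>3 (\<phi>1 h u v) (\<phi>2 h u v) (\<phi>3 h u v) = v"
  shows "generically_rational_solution (\<lambda>h u v. R (\<phi>1 h u v) (\<phi>2 h u v) (\<phi>3 h u v))"
proof -
  obtain N1 N2 Q G where p: "poly3_fun N1" "poly3_fun N2" "poly3_fun Q" "poly3_fun G"
    and G0: "G \<noteq> (\<lambda>_ _ _. 0)"
    and sol: "\<And>h u v. G h u v \<noteq> 0 \<Longrightarrow>
       Q h u v \<noteq> 0 \<and> {(s, t). R h u v s t} = {(N1 h u v / Q h u v, N2 h u v / Q h u v)}"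
    using gr unfolding generically_rational_solution_def by blast
  let ?sub = "\<lambda>F h u v. F (\<phi>1 h u v) (\<phi>2 h u v) (\<phi>3 h u v)"
  have "poly3_fun (?sub F)" if "poly3_fun F" for F
    using poly3_compose[OF that \<phi>] .
  moreover have "?sub G \<noteq> (\<lambda>_ _ _. 0)"
  proof
    assume "?sub G = (\<lambda>_ _ _. 0)"
    then have "?sub G (\<phi>1 h u v) (\<phi>2 h u v) (\<phi>3 h u v) = 0" for h u v by metis
    then have "G = (\<lambda>_ _ _. 0)" using involution by (intro ext) simp
    then show False using G0 by simp
  qed
  moreover have "Q (\<phi>1 h u v) (\<phi>2 h u v) (\<phi>3 h u v) \<noteq> 0 \<and>
      {(s, t). R (\<phi>1 h u v) (\<phi>2 h u v) (\<phi>3 h u v) s t} =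
      {(?sub N1 h u v / ?sub Q h u v, ?sub N2 h u v / ?sub Q h u v)}"
    if "?sub G h u v \<noteq> 0" for h u v
    using sol[OF that] .
  ultimately show ?thesis unfolding generically_rational_solution_def
    using p by blast
qed

lemma gr_swap_solution:
  assumes "generically_rational_solution R"
  shows "generically_rational_solution (\<lambda>h u v s t. R h u v t s)"
proof -
  obtain N1 N2 Q G where p: "poly3_fun N1" "poly3_fun N2" "poly3_fun Q" "poly3_fun G"
    and G0: "G \<noteq> (\<lambda>_ _ _. 0)"
    and sol: "\<And>h u v. G h u v \<noteq> 0 \<Longrightarrow>
       Q h u v \<noteq> 0 \<and> {(s, t). R h u v s t} = {(N1 h u v / Q h u v, N2 h u v / Q h u v)}"
    using assms unfolding generically_rational_solution_def by blast
  have "Q h u v \<noteq> 0 \<and> {(s, t). R h u v t s} = {(N2 h u v / Q h u v, N1 h u v / Q h u v)}"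
    if "G h u v \<noteq> 0" for h u v
    using sol[OF that] by (auto simp: set_eq_iff)
  then show ?thesis unfolding generically_rational_solution_def
    using p G0 by blast
qed

lemma gr_swap_variables_iff:
  "generically_rational_solution (\<lambda>h u v s t. R h v u t s) \<longleftrightarrow> generically_rational_solution R"
proof -
  have swap: "generically_rational_solution (\<lambda>h u v s t. R h v u t s)"
    if "generically_rational_solution R" for R
    using gr_swap_solution[OF gr_substitute[OF that poly3_h poly3_v poly3_u]] by simp
  show ?thesis using swap[of R] swap[of "\<lambda>h u v s t. R h v u t s"] by auto
qed

lemma gr_negate_step_iff:
  "generically_rational_solution (\<lambda>h. R (-h)) \<longleftrightarrow> generically_rational_solution R"
proof -
  have neg: "generically_rational_solution (\<lambda>h. R (-h))"
    if "generically_rational_solution R" for R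
    using gr_substitute[OF that poly3_uminus[OF poly3_h] poly3_u poly3_v] by simp
  show ?thesis using neg[of R] neg[of "\<lambda>h. R (-h)"] by auto
qed

lemma gr_explicit_solution:
  assumes "poly3_fun N1" "poly3_fun N2" "poly3_fun Q" and "Q h0 u0 v0 \<noteq> 0"
    and "\<And>h u v s t. Q h u v \<noteq> 0 \<Longrightarrow> R h u v s t \<longleftrightarrow> s = N1 h u v / Q h u v \<and> t = N2 h u v / Q h u v"
  shows "generically_rational_solution R"
proof -
  have "Q \<noteq> (\<lambda>_ _ _. 0)" using assms(4) by metis
  moreover have "{(s, t). R h u v s t} = {(N1 h u v / Q h u v, N2 h u v / Q h u v)}"
    if "Q h u v \<noteq> 0" for h u v
    using assms(5)[OF that] by auto
  ultimately show ?thesis unfolding generically_rational_solution_def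
    using assms(1-3) by blast
qed

lemma cramer_solution:
  fixes p1 r1 k1 p2 r2 k2 s t :: complex
  assumes det: "p1 * p2 - r1 * r2 \<noteq> 0"
  shows "(s * p1 + r1 * t = k1 \<and> t * p2 + r2 * s = k2) \<longleftrightarrow>
     (s = (k1 * p2 - r1 * k2) / (p1 * p2 - r1 * r2) \<and> t = (p1 * k2 - r2 * k1) / (p1 * p2 - r1 * r2))"
    (is "?sys \<longleftrightarrow> ?sol")
proof
  assume ?sys
  then have "s * (p1 * p2 - r1 * r2) = k1 * p2 - r1 * k2" "t * (p1 * p2 - r1 * r2) = p1 * k2 - r2 * k1"
    by (auto simp: algebra_simps)
  then show ?sol using det by (simp add: field_simps)
next
  assume ?sol
  then have s: "s * (p1 * p2 - r1 * r2) = k1 * p2 - r1 * k2"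
    and t: "t * (p1 * p2 - r1 * r2) = p1 * k2 - r2 * k1"
    using det by simp_all
  have "(s * p1 + r1 * t - k1) * (p1 * p2 - r1 * r2) =
      p1 * (s * (p1 * p2 - r1 * r2)) + r1 * (t * (p1 * p2 - r1 * r2)) - k1 * (p1 * p2 - r1 * r2)"
    by (simp add: algebra_simps)
  also have "\<dots> = 0" unfolding s t by (simp add: algebra_simps)
  finally have 1: "(s * p1 + r1 * t - k1) * (p1 * p2 - r1 * r2) = 0" .
  have "(t * p2 + r2 * s - k2) * (p1 * p2 - r1 * r2) =
      p2 * (t * (p1 * p2 - r1 * r2)) + r2 * (s * (p1 * p2 - r1 * r2)) - k2 * (p1 * p2 - r1 * r2)"
    by (simp add: algebra_simps)
  also have "\<dots> = 0" unfolding s t by (simp add: algebra_simps)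
  finally have 2: "(t * p2 + r2 * s - k2) * (p1 * p2 - r1 * r2) = 0" .
  from 1 2 show ?sys using det by simp
qed

lemma triangular_solution:
  fixes p1 q2 k1 p2 r2 k2 s t :: complex
  assumes p1: "p1 \<noteq> 0" and M: "p1 * p2 + q2 * k1 \<noteq> 0"
  shows "(s * p1 = k1 \<and> t * p2 + q2 * s * t + r2 * s = k2) \<longleftrightarrow>
     (s = (k1 * (p1 * p2 + q2 * k1)) / (p1 * (p1 * p2 + q2 * k1)) \<and>
      t = (p1 * (k2 * p1 - r2 * k1)) / (p1 * (p1 * p2 + q2 * k1)))"
proof -
  have elim: "(t * p2 + q2 * s * t + r2 * s - k2) * p1 = t * (p1 * p2 + q2 * k1) + r2 * k1 - k2 * p1"
    if "s * p1 = k1" for s t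
  proof -
    have "(t * p2 + q2 * s * t + r2 * s - k2) * p1 = t * p2 * p1 + q2 * t * (s * p1) + r2 * (s * p1) - k2 * p1"
      by (simp add: algebra_simps)
    also have "\<dots> = t * (p1 * p2 + q2 * k1) + r2 * k1 - k2 * p1" using that by (simp add: algebra_simps)
    finally show ?thesis .
  qed
  have s_eq: "(k1 * (p1 * p2 + q2 * k1)) / (p1 * (p1 * p2 + q2 * k1)) = k1 / p1" using M by simp
  have t_eq: "(p1 * (k2 * p1 - r2 * k1)) / (p1 * (p1 * p2 + q2 * k1)) = (k2 * p1 - r2 * k1) / (p1 * p2 + q2 * k1)"
    using p1 by simp
  show ?thesis unfolding s_eq t_eq
  proof
    assume sys: "s * p1 = k1 \<and> t * p2 + q2 * s * t + r2 * s = k2"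
    then have "t * (p1 * p2 + q2 * k1) = k2 * p1 - r2 * k1" using elim[of s t] by (simp add: eq_diff_eq)
    then show "s = k1 / p1 \<and> t = (k2 * p1 - r2 * k1) / (p1 * p2 + q2 * k1)"
      using sys p1 M by (simp add: field_simps)
  next
    assume sol: "s = k1 / p1 \<and> t = (k2 * p1 - r2 * k1) / (p1 * p2 + q2 * k1)"
    then have s: "s * p1 = k1" using p1 by simp
    have "t * (p1 * p2 + q2 * k1) = k2 * p1 - r2 * k1" using sol M by simp
    then have "(t * p2 + q2 * s * t + r2 * s - k2) * p1 = 0" using elim[OF s] by simp
    then show "s * p1 = k1 \<and> t * p2 + q2 * s * t + r2 * s = k2" using s p1 by simp
  qed
qed

(* A suitable combination of the two equations is linear in (s, t) (coefficients lam, mu, nu);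
   eliminating t with it leaves a quadratic alpha s^2 + beta s + gamma = 0.  When this is
   non-degenerate with nonzero discriminant, its other root yields a second solution. *)
lemma second_solution:
  fixes p1 q1 r1 k1 p2 q2 r2 k2 s t :: complex
  defines "lam \<equiv> q2 * p1 - q1 * r2" and "mu \<equiv> q2 * r1 - q1 * p2" and "nu \<equiv> q2 * k1 - q1 * k2"
  defines "alpha \<equiv> - lam * q2" and "beta \<equiv> nu * q2 - lam * p2 + r2 * mu"
    and "gamma \<equiv> nu * p2 - k2 * mu"
  assumes eq1: "s * p1 + q1 * s * t + r1 * t = k1" and eq2: "t * p2 + q2 * s * t + r2 * s = k2"
    and q2: "q2 \<noteq> 0" and mu: "mu \<noteq> 0" and alpha: "alpha \<noteq> 0"
    and discr: "beta\<^sup>2 - 4 * alpha * gamma \<noteq> 0"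
  shows "\<exists>s' t'. s' * p1 + q1 * s' * t' + r1 * t' = k1 \<and> t' * p2 + q2 * s' * t' + r2 * s' = k2 \<and> s' \<noteq> s"
proof -
  have lin: "q2 * (s * p1 + q1 * s * t + r1 * t - k1) - q1 * (t * p2 + q2 * s * t + r2 * s - k2) =
      lam * s + mu * t - nu" for s t
    unfolding lam_def mu_def nu_def by (simp add: algebra_simps)
  have quad: "mu * (t * p2 + q2 * s * t + r2 * s - k2) =
      (alpha * s\<^sup>2 + beta * s + gamma) + (p2 + q2 * s) * (lam * s + mu * t - nu)" for s t
    unfolding alpha_def beta_def gamma_def by (simp add: algebra_simps power2_eq_square)
  have L: "lam * s + mu * t - nu = 0" using lin[where s=s and t=t] eq1 eq2 by simp
  have Q: "alpha * s\<^sup>2 + beta * s + gamma = 0" using quad[where s=s and t=t] eq2 L by simp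
  define s' where "s' = - beta / alpha - s"
  define t' where "t' = (nu - lam * s') / mu"
  have "alpha * s'\<^sup>2 + beta * s' + gamma = alpha * s\<^sup>2 + beta * s + gamma"
    unfolding s'_def using alpha by (simp add: field_simps power2_eq_square)
  then have Q': "alpha * s'\<^sup>2 + beta * s' + gamma = 0" using Q by simp
  have L': "lam * s' + mu * t' - nu = 0" unfolding t'_def using mu by (simp add: field_simps)
  have eq2': "t' * p2 + q2 * s' * t' + r2 * s' = k2"
    using quad[where s=s' and t=t'] Q' L' mu by simp
  have eq1': "s' * p1 + q1 * s' * t' + r1 * t' = k1"
    using lin[where s=s' and t=t'] L' eq2' q2 by simp
  have "s' \<noteq> s"
  proof
    assume "s' = s"
    then have "alpha * s = - beta - alpha * s" unfolding s'_def using alpha by (simp add: field_simps)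
    then have "2 * alpha * s + beta = 0" by algebra
    moreover have "(2 * alpha * s + beta)\<^sup>2 - 4 * alpha * (alpha * s\<^sup>2 + beta * s + gamma) =
        beta\<^sup>2 - 4 * alpha * gamma"
      by (simp add: algebra_simps power2_eq_square)
    ultimately show False using Q discr by simp
  qed
  then show ?thesis using eq1' eq2' by blast
qed

(* The general first-order scheme; (x, y) are the old and (s, t) the new values. *)
definition bilinear_scheme :: "complex \<Rightarrow> complex \<Rightarrow> complex \<Rightarrow> complex \<Rightarrow> complex \<Rightarrow> complex \<Rightarrow>
   complex \<Rightarrow> complex \<Rightarrow> complex \<Rightarrow> complex \<Rightarrow> complex \<Rightarrow> complex \<Rightarrow>
   complex \<Rightarrow> complex \<Rightarrow> complex \<Rightarrow> complex \<Rightarrow> complex \<Rightarrow> bool" where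
  "bilinear_scheme a1 a2 b c d e A1 A2 B C D E h x y s t \<longleftrightarrow>
     s - x = h * (a1 * x + a2 * s + b * x * y + c * s * t + d * x * t + e * s * y) \<and>
     t - y = h * (A1 * y + A2 * t + B * x * y + C * s * t + D * x * t + E * s * y)"

lemma bilinear_scheme_swap:
  "bilinear_scheme a1 a2 b c d e A1 A2 B C D E h x y s t \<longleftrightarrow>
   bilinear_scheme A1 A2 B C E D a1 a2 b c e d h y x t s"
  unfolding bilinear_scheme_def by (auto simp: algebra_simps)

lemma bilinear_scheme_reverse:
  "bilinear_scheme a1 a2 b c d e A1 A2 B C D E h x y s t \<longleftrightarrow>
   bilinear_scheme a2 a1 c b e d A2 A1 C B E D (-h) s t x y"
  unfolding bilinear_scheme_def by (auto simp: algebra_simps)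

lemma LV_sys_eq_bilinear_scheme:
  assumes "h \<noteq> 0"
  shows "LV_sys a b c d e A B C D E h x y xt yt \<longleftrightarrow>
    bilinear_scheme (of_real a) (of_real (1 - a)) (- of_real b) (- of_real c) (- of_real d) (- of_real e)
      (- of_real A) (- of_real (1 - A)) (of_real B) (of_real C) (of_real D) (of_real E) h x y xt yt"
proof -
  have div_eq: "p / h = q \<longleftrightarrow> p = h * q" for p q :: complex using assms by (auto simp: field_simps)
  show ?thesis unfolding LV_sys_def bilinear_scheme_def div_eq by (simp add: algebra_simps)
qed

locale scheme_coefficients =
  fixes a1 a2 b c d e A1 A2 B C D E :: complex
begin

definition "p1 h u (v::complex) = 1 - h * a2 - h * e * v"
definition "q1 h (u::complex) (v::complex) = - h * c"
definition "r1 h u (v::complex) = - h * d * u"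
definition "k1 h u v = u * (1 + h * a1 + h * b * v)"
definition "p2 h u (v::complex) = 1 - h * A2 - h * D * u"
definition "q2 h (u::complex) (v::complex) = - h * C"
definition "r2 h (u::complex) v = - h * E * v"
definition "k2 h u v = v * (1 + h * A1 + h * B * u)"

lemmas coefficient_defs = p1_def q1_def r1_def k1_def p2_def q2_def r2_def k2_def

lemma poly3_coefficients:
  "poly3_fun p1" "poly3_fun q1" "poly3_fun r1" "poly3_fun k1"
  "poly3_fun p2" "poly3_fun q2" "poly3_fun r2" "poly3_fun k2"
  unfolding coefficient_defs by (intro poly3_intros)+

lemma scheme_normal_form:
  "bilinear_scheme a1 a2 b c d e A1 A2 B C D E h u v s t \<longleftrightarrow>
     s * p1 h u v + q1 h u v * s * t + r1 h u v * t = k1 h u v \<and>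
     t * p2 h u v + q2 h u v * s * t + r2 h u v * s = k2 h u v"
  unfolding bilinear_scheme_def coefficient_defs by (auto simp: algebra_simps)

lemma gr_if_linear:
  assumes "c = 0" and "C = 0"
  shows "generically_rational_solution (bilinear_scheme a1 a2 b c d e A1 A2 B C D E)"
proof (rule gr_explicit_solution)
  let ?Q = "\<lambda>h u v. p1 h u v * p2 h u v - r1 h u v * r2 h u v"
  show "poly3_fun (\<lambda>h u v. k1 h u v * p2 h u v - r1 h u v * k2 h u v)"
    "poly3_fun (\<lambda>h u v. p1 h u v * k2 h u v - r2 h u v * k1 h u v)" "poly3_fun ?Q"
    by (intro poly3_intros poly3_coefficients)+
  show "?Q 0 0 0 \<noteq> 0" unfolding coefficient_defs by simp
  fix h u v s t assume "?Q h u v \<noteq> 0"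
  moreover have "q1 h u v = 0" "q2 h u v = 0" unfolding coefficient_defs using assms by simp_all
  ultimately show "bilinear_scheme a1 a2 b c d e A1 A2 B C D E h u v s t \<longleftrightarrow>
      s = (k1 h u v * p2 h u v - r1 h u v * k2 h u v) / ?Q h u v \<and>
      t = (p1 h u v * k2 h u v - r2 h u v * k1 h u v) / ?Q h u v"
    unfolding scheme_normal_form by (simp add: cramer_solution)
qed

lemma gr_if_triangular:
  assumes "c = 0" and "d = 0"
  shows "generically_rational_solution (bilinear_scheme a1 a2 b c d e A1 A2 B C D E)"
proof (rule gr_explicit_solution)
  let ?M = "\<lambda>h u v. p1 h u v * p2 h u v + q2 h u v * k1 h u v"
  let ?Q = "\<lambda>h u v. p1 h u v * ?M h u v"
  show "poly3_fun (\<lambda>h u v. k1 h u v * ?M h u v)"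
    "poly3_fun (\<lambda>h u v. p1 h u v * (k2 h u v * p1 h u v - r2 h u v * k1 h u v))" "poly3_fun ?Q"
    by (intro poly3_intros poly3_coefficients)+
  show "?Q 0 0 0 \<noteq> 0" unfolding coefficient_defs by simp
  fix h u v s t assume "?Q h u v \<noteq> 0"
  moreover have "q1 h u v = 0" "r1 h u v = 0" unfolding coefficient_defs using assms by simp_all
  ultimately show "bilinear_scheme a1 a2 b c d e A1 A2 B C D E h u v s t \<longleftrightarrow>
      s = k1 h u v * ?M h u v / ?Q h u v \<and>
      t = p1 h u v * (k2 h u v * p1 h u v - r2 h u v * k1 h u v) / ?Q h u v"
    unfolding scheme_normal_form by (simp add: triangular_solution)
qed

(* The elimination quantities of second_solution as polynomials, and their product with h,
   whose non-vanishing at a point rules out a unique solution there. *)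
definition "lam h u v = q2 h u v * p1 h u v - q1 h u v * r2 h u v"
definition "mu h u v = q2 h u v * r1 h u v - q1 h u v * p2 h u v"
definition "nu h u v = q2 h u v * k1 h u v - q1 h u v * k2 h u v"
definition "alpha h u v = - lam h u v * q2 h u v"
definition "beta h u v = nu h u v * q2 h u v - lam h u v * p2 h u v + r2 h u v * mu h u v"
definition "gamma h u v = nu h u v * p2 h u v - k2 h u v * mu h u v"
definition "discr h u v = (beta h u v)\<^sup>2 - 4 * alpha h u v * gamma h u v"
definition "obstruction h u v = h * mu h u v * alpha h u v * discr h u v"

lemmas elimination_defs = lam_def mu_def nu_def alpha_def beta_def gamma_def discr_def

lemma poly3_obstruction: "poly3_fun obstruction"
  unfolding obstruction_def elimination_defs by (intro poly3_intros poly3_coefficients)+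

(* If C \<noteq> 0 and (c, d) \<noteq> 0 the obstruction is not identically zero; it is evaluated
   at (h, 0, 0) resp. (h, 1, 0) for a small h \<noteq> 0. *)
lemma obstruction_nonzero:
  assumes C: "C \<noteq> 0" and cd: "c \<noteq> 0 \<or> d \<noteq> 0"
  shows "\<exists>h u v. obstruction h u v \<noteq> 0"
proof (cases "c = 0")
  case False
  obtain h where h: "h \<noteq> 0" "(1 - h * a2) * (1 - h * A2) \<noteq> 0"
    using nonzero_near_zero[of "\<lambda>h. (1 - h * a2) * (1 - h * A2)"] by (auto intro!: continuous_intros)
  have "mu h 0 0 = h * c * (1 - h * A2)"
    unfolding mu_def coefficient_defs by (simp add: algebra_simps)
  moreover have "alpha h 0 0 = - (h * C * (h * C * (1 - h * a2)))"
    unfolding alpha_def lam_def coefficient_defs by (simp add: algebra_simps)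
  moreover have "discr h 0 0 = (h * C * (1 - h * a2) * (1 - h * A2))\<^sup>2"
    unfolding discr_def beta_def gamma_def lam_def nu_def mu_def coefficient_defs
    by (simp add: algebra_simps)
  ultimately have "obstruction h 0 0 \<noteq> 0" unfolding obstruction_def using h C False by simp
  then show ?thesis by blast
next
  case True
  then have d: "d \<noteq> 0" using cd by simp
  define f where "f = (\<lambda>h. (1 - h * a2) * (h * C * (1 + h * a1) - (1 - h * a2) * (1 - h * A2 - h * D)))"
  obtain h where h: "h \<noteq> 0" "f h \<noteq> 0"
    using nonzero_near_zero[of f] unfolding f_def by (auto intro!: continuous_intros)
  have "mu h 1 0 = h * h * C * d"
    unfolding mu_def coefficient_defs using True by (simp add: algebra_simps)
  moreover have "alpha h 1 0 = - (h * C * (h * C * (1 - h * a2)))"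
    unfolding alpha_def lam_def coefficient_defs using True by (simp add: algebra_simps)
  moreover have "discr h 1 0 = (h * C)\<^sup>2 * (h * C * (1 + h * a1) - (1 - h * a2) * (1 - h * A2 - h * D))\<^sup>2"
    unfolding discr_def beta_def gamma_def alpha_def lam_def nu_def mu_def coefficient_defs using True
    by (simp add: algebra_simps power2_eq_square)
  ultimately have "obstruction h 1 0 \<noteq> 0" unfolding obstruction_def using h C d by (simp add: f_def)
  then show ?thesis by blast
qed

lemma not_gr_if_quadratic:
  assumes C: "C \<noteq> 0" and cd: "c \<noteq> 0 \<or> d \<noteq> 0"
  shows "\<not> generically_rational_solution (bilinear_scheme a1 a2 b c d e A1 A2 B C D E)"
proof
  assume "generically_rational_solution (bilinear_scheme a1 a2 b c d e A1 A2 B C D E)"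
  then obtain N1 N2 Q G where G: "poly3_fun G" "G \<noteq> (\<lambda>_ _ _. 0)"
    and sol: "\<And>h u v. G h u v \<noteq> 0 \<Longrightarrow> {(s, t). bilinear_scheme a1 a2 b c d e A1 A2 B C D E h u v s t} =
       {(N1 h u v / Q h u v, N2 h u v / Q h u v)}"
    unfolding generically_rational_solution_def by blast
  obtain g1 g2 g3 where "G g1 g2 g3 \<noteq> 0" using G(2) by (meson ext)
  moreover obtain o1 o2 o3 where "obstruction o1 o2 o3 \<noteq> 0" using obstruction_nonzero[OF C cd] by blast
  ultimately obtain h u v where Ghuv: "G h u v \<noteq> 0" and obs: "obstruction h u v \<noteq> 0"
    using poly3_common_nonzero[OF G(1) poly3_obstruction] by blast
  have h: "h \<noteq> 0" and nondeg: "mu h u v \<noteq> 0" "alpha h u v \<noteq> 0" "discr h u v \<noteq> 0"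
    using obs unfolding obstruction_def by auto
  have q2: "q2 h u v \<noteq> 0" unfolding q2_def using h C by simp
  obtain s0 t0 where unique: "{(s, t). bilinear_scheme a1 a2 b c d e A1 A2 B C D E h u v s t} = {(s0, t0)}"
    using sol[OF Ghuv] by blast
  then have "bilinear_scheme a1 a2 b c d e A1 A2 B C D E h u v s0 t0" by blast
  then have eq1: "s0 * p1 h u v + q1 h u v * s0 * t0 + r1 h u v * t0 = k1 h u v"
    and eq2: "t0 * p2 h u v + q2 h u v * s0 * t0 + r2 h u v * s0 = k2 h u v"
    unfolding scheme_normal_form by auto
  obtain s' t' where "bilinear_scheme a1 a2 b c d e A1 A2 B C D E h u v s' t'" "s' \<noteq> s0"
    using second_solution[OF eq1 eq2 q2] nondeg
    unfolding scheme_normal_form elimination_defs by blast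
  then show False using unique by blast
qed

end

lemma gr_bilinear_scheme_swap:
  "generically_rational_solution (bilinear_scheme a1 a2 b c d e A1 A2 B C D E) \<longleftrightarrow>
   generically_rational_solution (bilinear_scheme A1 A2 B C E D a1 a2 b c e d)"
proof -
  have "(\<lambda>h u v s t. bilinear_scheme A1 A2 B C E D a1 a2 b c e d h v u t s) =
      bilinear_scheme a1 a2 b c d e A1 A2 B C D E"
    by (intro ext) (rule bilinear_scheme_swap[symmetric])
  then show ?thesis
    using gr_swap_variables_iff[of "bilinear_scheme A1 A2 B C E D a1 a2 b c e d"] by simp
qed

lemma gr_bilinear_scheme_iff:
  "generically_rational_solution (bilinear_scheme a1 a2 b c d e A1 A2 B C D E) \<longleftrightarrow>
     (c = 0 \<and> C = 0) \<or> (c = 0 \<and> d = 0) \<or> (C = 0 \<and> E = 0)"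
proof -
  note swap = gr_bilinear_scheme_swap[of a1 a2 b c d e A1 A2 B C D E]
  consider "C = 0" "E = 0" | "C = 0" "E \<noteq> 0" "c = 0" | "C = 0" "E \<noteq> 0" "c \<noteq> 0"
    | "C \<noteq> 0" "c = 0" "d = 0" | "C \<noteq> 0" "c \<noteq> 0 \<or> d \<noteq> 0"
    by blast
  then show ?thesis
  proof cases
    case 1
    then show ?thesis
      using swap scheme_coefficients.gr_if_triangular[of C E A1 A2 B D a1 a2 b c e d] by simp
  next
    case 2
    then show ?thesis using scheme_coefficients.gr_if_linear[of c C] by simp
  next
    case 3
    then show ?thesis
      using swap scheme_coefficients.not_gr_if_quadratic[of c C E A1 A2 B D a1 a2 b e d] by simp
  next
    case 4
    then show ?thesis using scheme_coefficients.gr_if_triangular[of c d] by simp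
  next
    case 5
    then show ?thesis using scheme_coefficients.not_gr_if_quadratic[of C c d] by auto
  qed
qed

lemma birational_cases_iff:
  fixes b c d e B C D E :: real
  assumes "b + c + d + e = 1" and "B + C + D + E = 1"
  shows "(((c = 0 \<and> C = 0) \<or> (c = 0 \<and> d = 0) \<or> (C = 0 \<and> E = 0)) \<and>
         ((b = 0 \<and> B = 0) \<or> (b = 0 \<and> e = 0) \<or> (B = 0 \<and> D = 0))) \<longleftrightarrow>
    ((b = 0 \<and> c = 0 \<and> B = 0 \<and> C = 0 \<and> d + e = 1 \<and> D + E = 1) \<or>
     (b = 0 \<and> c = 0 \<and> d = 1 \<and> e = 0 \<and> C = 0 \<and> B + D + E = 1) \<or>
     (b = 0 \<and> c = 0 \<and> d = 0 \<and> e = 1 \<and> B = 0 \<and> C + D + E = 1) \<or>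
     (c = 0 \<and> B = 0 \<and> C = 0 \<and> D = 0 \<and> E = 1 \<and> b + d + e = 1) \<or>
     (b = 0 \<and> B = 0 \<and> C = 0 \<and> D = 1 \<and> E = 0 \<and> c + d + e = 1) \<or>
     (b = 0 \<and> e = 0 \<and> C = 0 \<and> E = 0 \<and> c + d = 1 \<and> B + D = 1) \<or>
     (c = 0 \<and> d = 0 \<and> B = 0 \<and> D = 0 \<and> b + e = 1 \<and> C + E = 1))" (is "?L \<longleftrightarrow> ?R")
proof
  assume ?L
  then show ?R using assms by (elim conjE disjE) simp_all
next
  assume ?R
  then show ?L by (elim conjE disjE) simp_all
qed

theorem theorem1:
  fixes a b c d e A B C D E :: real
  assumes "b + c + d + e = 1" and "B + C + D + E = 1"
  shows "LV_birational a b c d e A B C D E \<longleftrightarrow>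
    ((b = 0 \<and> c = 0 \<and> B = 0 \<and> C = 0 \<and> d + e = 1 \<and> D + E = 1) \<or>
     (b = 0 \<and> c = 0 \<and> d = 1 \<and> e = 0 \<and> C = 0 \<and> B + D + E = 1) \<or>
     (b = 0 \<and> c = 0 \<and> d = 0 \<and> e = 1 \<and> B = 0 \<and> C + D + E = 1) \<or>
     (c = 0 \<and> B = 0 \<and> C = 0 \<and> D = 0 \<and> E = 1 \<and> b + d + e = 1) \<or>
     (b = 0 \<and> B = 0 \<and> C = 0 \<and> D = 1 \<and> E = 0 \<and> c + d + e = 1) \<or>
     (b = 0 \<and> e = 0 \<and> C = 0 \<and> E = 0 \<and> c + d = 1 \<and> B + D = 1) \<or>
     (c = 0 \<and> d = 0 \<and> B = 0 \<and> D = 0 \<and> b + e = 1 \<and> C + E = 1))"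
proof -
  let ?forward = "bilinear_scheme (of_real a) (of_real (1 - a)) (- of_real b) (- of_real c)
    (- of_real d) (- of_real e) (- of_real A) (- of_real (1 - A)) (of_real B) (of_real C) (of_real D) (of_real E)"
  let ?backward = "bilinear_scheme (of_real (1 - a)) (of_real a) (- of_real c) (- of_real b)
    (- of_real e) (- of_real d) (- of_real (1 - A)) (- of_real A) (of_real C) (of_real B) (of_real E) (of_real D)"
  have "generically_rational_solution (\<lambda>h x y xt yt. LV_sys a b c d e A B C D E h x y xt yt) \<longleftrightarrow>
      generically_rational_solution ?forward"
    by (rule gr_cong) (simp add: LV_sys_eq_bilinear_scheme)
  also have "\<dots> \<longleftrightarrow> (c = 0 \<and> C = 0) \<or> (c = 0 \<and> d = 0) \<or> (C = 0 \<and> E = 0)"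
    by (simp add: gr_bilinear_scheme_iff)
  finally have forward: "generically_rational_solution (\<lambda>h x y xt yt. LV_sys a b c d e A B C D E h x y xt yt)
      \<longleftrightarrow> (c = 0 \<and> C = 0) \<or> (c = 0 \<and> d = 0) \<or> (C = 0 \<and> E = 0)" .
  have backward_eq: "LV_sys a b c d e A B C D E h x y xt yt \<longleftrightarrow> ?backward (-h) xt yt x y"
    if "h \<noteq> 0" for h x y xt yt
    unfolding LV_sys_eq_bilinear_scheme[OF that] by (rule bilinear_scheme_reverse)
  have "generically_rational_solution (\<lambda>h xt yt x y. LV_sys a b c d e A B C D E h x y xt yt) \<longleftrightarrow>
      generically_rational_solution (\<lambda>h. ?backward (-h))"
    by (rule gr_cong) (simp add: backward_eq)
  also have "\<dots> \<longleftrightarrow> (b = 0 \<and> B = 0) \<or> (b = 0 \<and> e = 0) \<or> (B = 0 \<and> D = 0)"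
    by (simp add: gr_negate_step_iff gr_bilinear_scheme_iff)
  finally show ?thesis
    unfolding LV_birational_def forward using birational_cases_iff[OF assms] by simp
qed

end
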